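(* Consider a single-stage screening process with two groups $A,B$ and a test satisfying $\tau_{X1}>\tau_{X0}\ge0$ for $X\in\{A,B\}$. The interview efficiency of any policy satisfying Equalized Odds (with positive true positive rate) is at most $$\frac{1}{1+\frac{u_A+u_B}{q_A+q_B}\cdot\max\left(\frac{\tau_{A0}}{\tau_{A1}},\frac{\tau_{B0}}{\tau_{B1}}\right)}.$$
   Context: Group $X$ has base rate $q_X$ and $u_X=1-q_X$; $\tau_{X1}$ (resp. $\tau_{X0}$) is the probability a qualified (resp. unqualified) member of $X$ passes the test. A policy specifies $\pi_{X1},\pi_{X0}\in[0,1]$, the promotion probabilities after passing (resp. failing). Let $M_X=\tau_{X1}\pi_{X1}+(1-\tau_{X1})\pi_{X0}$ and $N_X=\tau_{X0}\pi_{X1}+(1-\tau_{X0})\pi_{X0}$. The policy satisfies Equalized Odds if $M_A=M_B=:M$ and $N_A=N_B=:N$; its interview efficiency is then $\frac{(q_A+q_B)M}{(q_A+q_B)M+(u_A+u_B)N}$. *)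

theory Defs
  imports Complex_Main
begin

text \<open>Promotion probability of a qualified member (M_X) and of an unqualified
member (N_X) of a group with pass probabilities tau1 (qualified), tau0 (unqualified),
under policy (pi1, pi0).\<close>
definition Mrate :: "real \<Rightarrow> real \<Rightarrow> real \<Rightarrow> real" where
  "Mrate tau1 pi1 pi0 = tau1 * pi1 + (1 - tau1) * pi0"

definition Nrate :: "real \<Rightarrow> real \<Rightarrow> real \<Rightarrow> real" where
  "Nrate tau0 pi1 pi0 = tau0 * pi1 + (1 - tau0) * pi0"

definition is_policy :: "real \<Rightarrow> real \<Rightarrow> bool" where
  "is_policy pi1 pi0 \<longleftrightarrow> 0 \<le> pi1 \<and> pi1 \<le> 1 \<and> 0 \<le> pi0 \<and> pi0 \<le> 1"

definition equalized_odds ::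
  "real \<Rightarrow> real \<Rightarrow> real \<Rightarrow> real \<Rightarrow> real \<Rightarrow> real \<Rightarrow> real \<Rightarrow> real \<Rightarrow> bool" where
  "equalized_odds tA1 tA0 tB1 tB0 piA1 piA0 piB1 piB0 \<longleftrightarrow>
     Mrate tA1 piA1 piA0 = Mrate tB1 piB1 piB0 \<and> Nrate tA0 piA1 piA0 = Nrate tB0 piB1 piB0"

definition interview_efficiency :: "real \<Rightarrow> real \<Rightarrow> real \<Rightarrow> real \<Rightarrow> real" where
  "interview_efficiency qA qB M N =
     (qA + qB) * M / ((qA + qB) * M + ((1 - qA) + (1 - qB)) * N)"

end

theory Submission
  imports Defs
begin

text \<open>For every group, \<open>\<tau>\<^sub>X\<^sub>1 N\<^sub>X - \<tau>\<^sub>X\<^sub>0 M\<^sub>X = \<pi>\<^sub>X\<^sub>0 (\<tau>\<^sub>X\<^sub>1 - \<tau>\<^sub>X\<^sub>0) \<ge> 0\<close>, so the false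
  positive rate is at least \<open>\<tau>\<^sub>X\<^sub>0 / \<tau>\<^sub>X\<^sub>1\<close> times the true positive rate. Under Equalized Odds
  both groups share the rates \<open>M, N\<close>, hence \<open>N \<ge> max (\<tau>\<^sub>A\<^sub>0/\<tau>\<^sub>A\<^sub>1) (\<tau>\<^sub>B\<^sub>0/\<tau>\<^sub>B\<^sub>1) \<cdot> M\<close>, and the
  interview efficiency is a decreasing function of \<open>N / M\<close>.\<close>

lemma Nrate_minus_Mrate:
  "t1 * Nrate t0 pi1 pi0 - t0 * Mrate t1 pi1 pi0 = pi0 * (t1 - t0)"
  unfolding Mrate_def Nrate_def by (simp add: algebra_simps)

lemma ratio_mult_Mrate_le_Nrate:
  assumes "0 < t1" "t0 \<le> t1" "0 \<le> pi0"
  shows "t0 / t1 * Mrate t1 pi1 pi0 \<le> Nrate t0 pi1 pi0"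
proof -
  have "0 \<le> pi0 * (t1 - t0)" using assms by simp
  then have "t0 * Mrate t1 pi1 pi0 \<le> t1 * Nrate t0 pi1 pi0"
    using Nrate_minus_Mrate[of t1 t0 pi1 pi0] by linarith
  then show ?thesis using assms(1) by (simp add: field_simps)
qed

lemma interview_efficiency_le:
  assumes "0 < qA + qB" "qA \<le> 1" "qB \<le> 1"
    and "0 < M" "0 \<le> r" "r * M \<le> N"
  shows "interview_efficiency qA qB M N \<le> 1 / (1 + (((1 - qA) + (1 - qB)) / (qA + qB)) * r)"
proof -
  define Q where "Q = qA + qB"
  define U where "U = (1 - qA) + (1 - qB)"
  have "0 < Q" "0 \<le> U" using assms(1-3) by (simp_all add: Q_def U_def)
  have "0 \<le> N" using assms(4-6) by (meson mult_nonneg_nonneg less_imp_le order_trans)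
  have "Q * (U * (r * M)) \<le> Q * (U * N)"
    using assms(6) \<open>0 < Q\<close> \<open>0 \<le> U\<close> by (simp add: mult_left_mono)
  then have "Q * M * (Q + U * r) \<le> Q * (Q * M + U * N)"
    by (simp add: algebra_simps)
  moreover have "0 < Q * M + U * N" "0 < Q + U * r"
    using \<open>0 < Q\<close> \<open>0 \<le> U\<close> \<open>0 \<le> N\<close> assms(4,5) by (simp_all add: add_pos_nonneg)
  ultimately have "Q * M / (Q * M + U * N) \<le> Q / (Q + U * r)"
    by (simp add: divide_simps)
  also have "\<dots> = 1 / (1 + U / Q * r)" using \<open>0 < Q\<close> by (simp add: field_simps)
  finally show ?thesis unfolding interview_efficiency_def Q_def U_def .
qed

theorem mainTheorem17:
  fixes qA qB tA1 tA0 tB1 tB0 piA1 piA0 piB1 piB0 :: real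
  assumes qA: "0 \<le> qA" "qA \<le> 1" and qB: "0 \<le> qB" "qB \<le> 1" and qpos: "0 < qA + qB"
    and tA: "0 \<le> tA0" "tA0 < tA1" "tA1 \<le> 1"
    and tB: "0 \<le> tB0" "tB0 < tB1" "tB1 \<le> 1"
    and polA: "is_policy piA1 piA0" and polB: "is_policy piB1 piB0"
    and eo: "equalized_odds tA1 tA0 tB1 tB0 piA1 piA0 piB1 piB0"
    and tpr: "Mrate tA1 piA1 piA0 > 0"
  shows "interview_efficiency qA qB (Mrate tA1 piA1 piA0) (Nrate tA0 piA1 piA0)
           \<le> 1 / (1 + (((1 - qA) + (1 - qB)) / (qA + qB)) * max (tA0 / tA1) (tB0 / tB1))"
proof -
  let ?M = "Mrate tA1 piA1 piA0" and ?N = "Nrate tA0 piA1 piA0"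
  have "tA0 / tA1 * ?M \<le> ?N"
    using tA polA by (intro ratio_mult_Mrate_le_Nrate) (auto simp: is_policy_def)
  moreover have "tB0 / tB1 * ?M \<le> ?N"
  proof -
    have "tB0 / tB1 * Mrate tB1 piB1 piB0 \<le> Nrate tB0 piB1 piB0"
      using tB polB by (intro ratio_mult_Mrate_le_Nrate) (auto simp: is_policy_def)
    then show ?thesis using eo by (simp add: equalized_odds_def)
  qed
  ultimately have "max (tA0 / tA1) (tB0 / tB1) * ?M \<le> ?N"
    by (simp add: max_def)
  moreover have "0 \<le> max (tA0 / tA1) (tB0 / tB1)"
    using tA by (simp add: le_max_iff_disj)
  ultimately show ?thesis
    using qpos qA(2) qB(2) tpr by (intro interview_efficiency_le)
qed

end
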